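(* Let $(K,\delta)$ be a differential field of characteristic zero and $x\in K$ with $\delta(x)=1$, and let $f\in K$. (i) Let $n$ be a positive integer. Then $f=\delta^n(g)$ for some $g\in K$ if and only if for every $i$ with $0\le i\le n-1$ there exists $h_i\in K$ with $x^if=\delta(h_i)$. (ii) $f$ is stable in $(K,\delta)$ if and only if for every $i\in\mathbb{N}$ there exists $g_i\in K$ with $x^if=\delta(g_i)$.
   Context: A differential field $(K,\delta)$ is a field with an additive map $\delta$ satisfying $\delta(fg)=f\delta(g)+g\delta(f)$. An element $f\in K$ is stable in $(K,\delta)$ if there is a sequence $(a_i)_{i\ge0}$ in $K$ with $a_0=f$ and $\delta(a_{i+1})=a_i$ for all $i\in\mathbb{N}$. *)

theory Defs
  imports Main
begin

definition derivation :: "('a::field \<Rightarrow> 'a) \<Rightarrow> bool" where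
  "derivation \<delta> \<longleftrightarrow> (\<forall>f g. \<delta> (f + g) = \<delta> f + \<delta> g) \<and>
                      (\<forall>f g. \<delta> (f * g) = f * \<delta> g + g * \<delta> f)"

definition stable :: "('a::field \<Rightarrow> 'a) \<Rightarrow> 'a \<Rightarrow> bool" where
  "stable \<delta> f \<longleftrightarrow> (\<exists>a :: nat \<Rightarrow> 'a. a 0 = f \<and> (\<forall>i. \<delta> (a (Suc i)) = a i))"

end

theory Submission
  imports Defs
begin

text \<open>Integration by parts, x^(j+1) \<delta>u = \<delta>(x^(j+1) u) - (j+1) x^j u, shows that in
  characteristic zero x^(j+1) \<delta>u has a primitive exactly when x^j u does. Hence, for
  f = \<delta>h, the conditions "x^(i+1) f has a primitive" are the conditions "x^i h has a
  primitive", which turns (i) into an induction on n. For (ii), the set S of elements all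
  of whose products with powers of x have primitives satisfies S \<subseteq> \<delta>(S), so a sequence
  of successive primitives can be chosen inside S.\<close>

locale differential_field =
  fixes \<delta> :: "'a::field \<Rightarrow> 'a"
  assumes derivation: "derivation \<delta>"
begin

lemma deriv_add: "\<delta> (a + b) = \<delta> a + \<delta> b"
  using derivation unfolding derivation_def by blast

lemma deriv_mult: "\<delta> (a * b) = a * \<delta> b + b * \<delta> a"
  using derivation unfolding derivation_def by blast

lemma deriv_zero: "\<delta> 0 = 0"
  using deriv_add[of 0 0] by (metis add_cancel_right_right)

lemma deriv_diff: "\<delta> (a - b) = \<delta> a - \<delta> b"
  using deriv_add[of "a - b" b] by (simp add: eq_diff_eq)

lemma deriv_of_nat_mult: "\<delta> (of_nat k * a) = of_nat k * \<delta> a"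
  by (induction k) (simp_all add: deriv_zero deriv_add distrib_right)

lemma deriv_divide_of_nat:
  assumes "of_nat k \<noteq> (0::'a)"
  shows "\<delta> (a / of_nat k) = \<delta> a / of_nat k"
  using deriv_of_nat_mult[of k "a / of_nat k"] assms by (simp add: eq_divide_eq mult.commute)

lemma deriv_power_Suc: "\<delta> (y ^ Suc k) = of_nat (Suc k) * y ^ k * \<delta> y"
  by (induction k) (simp_all add: deriv_mult algebra_simps)

lemma range_diff: "a \<in> range \<delta> \<Longrightarrow> b \<in> range \<delta> \<Longrightarrow> a - b \<in> range \<delta>"
  by (auto simp flip: deriv_diff)

lemma range_diff_iff:
  assumes "a \<in> range \<delta>"
  shows "a - b \<in> range \<delta> \<longleftrightarrow> b \<in> range \<delta>"
  using range_diff[OF assms] range_diff[OF assms, of "a - b"] by auto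

lemma range_of_nat_mult_iff:
  assumes "of_nat k \<noteq> (0::'a)"
  shows "of_nat k * a \<in> range \<delta> \<longleftrightarrow> a \<in> range \<delta>"
proof
  assume "of_nat k * a \<in> range \<delta>"
  then obtain h where "of_nat k * a = \<delta> h" by blast
  then have "a = \<delta> (h / of_nat k)"
    using assms by (simp add: deriv_divide_of_nat eq_divide_eq mult.commute)
  then show "a \<in> range \<delta>" by blast
next
  assume "a \<in> range \<delta>"
  then obtain h where "a = \<delta> h" by blast
  then have "of_nat k * a = \<delta> (of_nat k * h)"
    by (simp add: deriv_of_nat_mult)
  then show "of_nat k * a \<in> range \<delta>" by blast
qed

lemma range_funpow_Suc_iff:
  "f \<in> range (\<delta> ^^ Suc n) \<longleftrightarrow> (\<exists>h \<in> range (\<delta> ^^ n). f = \<delta> h)"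
  by auto

lemma stable_imp_range_funpow:
  assumes "stable \<delta> f"
  shows "f \<in> range (\<delta> ^^ n)"
proof -
  obtain a where "a 0 = f" and "\<forall>i. \<delta> (a (Suc i)) = a i"
    using assms unfolding stable_def by blast
  then have "f = (\<delta> ^^ n) (a n)"
    by (induction n) (simp_all add: funpow_Suc_right del: funpow.simps)
  then show ?thesis by blast
qed

lemma stable_if_subset_image:
  assumes "f \<in> S" and "S \<subseteq> \<delta> ` S"
  shows "stable \<delta> f"
proof -
  have "\<forall>u \<in> S. \<exists>v \<in> S. \<delta> v = u"
    using assms(2) by blast
  then obtain primitive
    where primitive: "\<And>u. u \<in> S \<Longrightarrow> primitive u \<in> S \<and> \<delta> (primitive u) = u"
    by metis
  define a where "a n = (primitive ^^ n) f" for n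
  have "a n \<in> S" for n
    by (induction n) (simp_all add: a_def assms(1) primitive)
  then have "\<delta> (a (Suc i)) = a i" for i
    by (simp add: a_def primitive)
  then show ?thesis
    unfolding stable_def by (intro exI[of _ a]) (simp add: a_def)
qed

end

locale differential_field_with_coordinate = differential_field \<delta>
  for \<delta> :: "'a::field_char_0 \<Rightarrow> 'a" +
  fixes x :: 'a
  assumes deriv_coordinate: "\<delta> x = 1"
begin

lemma integration_by_parts:
  "x ^ Suc j * \<delta> u = \<delta> (x ^ Suc j * u) - of_nat (Suc j) * (x ^ j * u)"
  using deriv_mult[of "x ^ Suc j" u] deriv_power_Suc[of x j] deriv_coordinate
  by (simp add: algebra_simps)

lemma power_mult_deriv_range_iff:
  "x ^ Suc j * \<delta> u \<in> range \<delta> \<longleftrightarrow> x ^ j * u \<in> range \<delta>"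
proof -
  have "x ^ Suc j * \<delta> u \<in> range \<delta> \<longleftrightarrow> of_nat (Suc j) * (x ^ j * u) \<in> range \<delta>"
    unfolding integration_by_parts by (intro range_diff_iff rangeI)
  also have "\<dots> \<longleftrightarrow> x ^ j * u \<in> range \<delta>"
    by (rule range_of_nat_mult_iff[OF of_nat_neq_0])
  finally show ?thesis .
qed

theorem range_funpow_iff: "f \<in> range (\<delta> ^^ n) \<longleftrightarrow> (\<forall>i<n. x ^ i * f \<in> range \<delta>)"
proof (induction n arbitrary: f)
  case 0
  then show ?case by simp
next
  case (Suc n)
  have "f \<in> range (\<delta> ^^ Suc n) \<longleftrightarrow> (\<exists>h. f = \<delta> h \<and> (\<forall>i<n. x ^ i * h \<in> range \<delta>))"
    unfolding range_funpow_Suc_iff Suc.IH[symmetric] by blast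
  also have "\<dots> \<longleftrightarrow> (\<exists>h. f = \<delta> h \<and> (\<forall>i<n. x ^ Suc i * f \<in> range \<delta>))"
    using power_mult_deriv_range_iff by blast
  also have "\<dots> \<longleftrightarrow> (\<forall>i<Suc n. x ^ i * f \<in> range \<delta>)"
    by (auto simp: less_Suc_eq_0_disj)
  finally show ?case .
qed

theorem stable_iff: "stable \<delta> f \<longleftrightarrow> (\<forall>i. x ^ i * f \<in> range \<delta>)"
proof
  assume "stable \<delta> f"
  then show "\<forall>i. x ^ i * f \<in> range \<delta>"
    using stable_imp_range_funpow range_funpow_iff by blast
next
  assume "\<forall>i. x ^ i * f \<in> range \<delta>"
  define S where "S = {u. \<forall>i. x ^ i * u \<in> range \<delta>}"
  have "f \<in> S"
    unfolding S_def using \<open>\<forall>i. x ^ i * f \<in> range \<delta>\<close> by blast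
  moreover have "S \<subseteq> \<delta> ` S"
  proof
    fix u assume u: "u \<in> S"
    then have "x ^ 0 * u \<in> range \<delta>"
      unfolding S_def by blast
    then obtain h where h: "u = \<delta> h"
      by auto
    have "x ^ Suc i * \<delta> h \<in> range \<delta>" for i
      using u unfolding S_def h by blast
    then have "x ^ i * h \<in> range \<delta>" for i
      using power_mult_deriv_range_iff by blast
    then show "u \<in> \<delta> ` S"
      unfolding S_def h by blast
  qed
  ultimately show "stable \<delta> f"
    by (rule stable_if_subset_image)
qed

end

theorem lemma2p10:
  fixes \<delta> :: "'a::field_char_0 \<Rightarrow> 'a" and x f :: 'a
  assumes "derivation \<delta>" and "\<delta> x = 1"
  shows "(\<forall>n::nat. n \<ge> 1 \<longrightarrow>
            ((\<exists>g. f = (\<delta> ^^ n) g) \<longleftrightarrow> (\<forall>i<n. \<exists>h. x ^ i * f = \<delta> h)))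
       \<and> (stable \<delta> f \<longleftrightarrow> (\<forall>i::nat. \<exists>g. x ^ i * f = \<delta> g))"
proof -
  interpret differential_field_with_coordinate \<delta> x
    using assms by unfold_locales
  show ?thesis
    using range_funpow_iff stable_iff by (simp add: image_iff)
qed

end
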